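(* Let $0<\alpha<\pi/4$ and $0<\beta\le\pi/4$, and consider the system on $S^2$ described in the context. There is no normal extremal pair $(x,\lambda)$ with $x(0)=N=(0,0,1)$ and a time $t_c>0$ such that the extremal is bang-bang on $[0,t_c]$ and totally singular on an interval $[t_c,t_c+\varepsilon]$, $\varepsilon>0$.
   Context: The system is $\dot x=Fx+u_1G_1x+u_2G_2x$ on the unit sphere $S^2\subset\mathbb R^3$, measurable controls $|u_i|\le1$, with $F=\cos\alpha\begin{pmatrix}0&-1&0\\1&0&0\\0&0&0\end{pmatrix}$, $G_1=\sin\alpha\sin\beta\begin{pmatrix}0&0&0\\0&0&-1\\0&1&0\end{pmatrix}$, $G_2=\sin\alpha\cos\beta\begin{pmatrix}0&0&-1\\0&0&0\\1&0&0\end{pmatrix}$. An extremal pair: trajectory $x$ with control $u$, Lipschitz row vector $\lambda(t)\in\mathbb R^3$ with $\lambda(t)\cdot x(t)=0$, $\lambda(t)\ne0$, and constant $\lambda_0\le0$, such that a.e. $\dot\lambda=-\lambda(F+u_1G_1+u_2G_2)$, $u(t)$ maximizes $\lambda Fx+u_1\lambda G_1x+u_2\lambda G_2x+\lambda_0$ over $[-1,1]^2$, and the maximum is $0$; normal if $\lambda_0<0$. Switching functions $\phi_i=\lambda G_ix$; totally singular on an interval means $\phi_1\equiv\phi_2\equiv0$ there. Bang-bang on an interval: finitely many arcs on which $u$ is a.e. constant in $\{-1,1\}^2$. *)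

theory Defs
  imports "HOL-Analysis.Analysis"
begin

definition Fm :: "real \<Rightarrow> real^3^3" where
  "Fm \<alpha> = cos \<alpha> *\<^sub>R vector [vector [0,-1,0], vector [1,0,0], vector [0,0,0]]"

definition G1m :: "real \<Rightarrow> real \<Rightarrow> real^3^3" where
  "G1m \<alpha> \<beta> = (sin \<alpha> * sin \<beta>) *\<^sub>R vector [vector [0,0,0], vector [0,0,-1], vector [0,1,0]]"

definition G2m :: "real \<Rightarrow> real \<Rightarrow> real^3^3" where
  "G2m \<alpha> \<beta> = (sin \<alpha> * cos \<beta>) *\<^sub>R vector [vector [0,0,-1], vector [0,0,0], vector [1,0,0]]"

definition Am :: "real \<Rightarrow> real \<Rightarrow> real \<Rightarrow> real \<Rightarrow> real^3^3" where
  "Am \<alpha> \<beta> v1 v2 = Fm \<alpha> + v1 *\<^sub>R G1m \<alpha> \<beta> + v2 *\<^sub>R G2m \<alpha> \<beta>"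

definition Ham :: "real \<Rightarrow> real \<Rightarrow> real^3 \<Rightarrow> real^3 \<Rightarrow> real \<Rightarrow> real \<Rightarrow> real \<Rightarrow> real" where
  "Ham \<alpha> \<beta> l y l0 v1 v2 = l \<bullet> (Fm \<alpha> *v y) + v1 * (l \<bullet> (G1m \<alpha> \<beta> *v y))
      + v2 * (l \<bullet> (G2m \<alpha> \<beta> *v y)) + l0"

definition north :: "real^3" where
  "north = vector [0,0,1]"

text \<open>Extremal pair on the time interval [0,T]: admissible measurable control with |u_i| \<le> 1,
  trajectory on the unit sphere that is a Caratheodory solution of the system (absolutely continuous,
  given in integral form), Lipschitz adjoint lambda with lambda x = 0, lambda nonzero, adjoint equation a.e.,
  maximum condition a.e. with maximum value 0, and constant lambda0 \<le> 0.\<close>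
definition extremal ::
  "real \<Rightarrow> real \<Rightarrow> real \<Rightarrow> (real \<Rightarrow> real) \<Rightarrow> (real \<Rightarrow> real) \<Rightarrow> (real \<Rightarrow> real^3)
     \<Rightarrow> (real \<Rightarrow> real^3) \<Rightarrow> real \<Rightarrow> bool" where
  "extremal \<alpha> \<beta> T u1 u2 x l l0 \<longleftrightarrow>
     0 < T \<and>
     set_borel_measurable lborel {0..T} u1 \<and> set_borel_measurable lborel {0..T} u2 \<and>
     (\<forall>t\<in>{0..T}. \<bar>u1 t\<bar> \<le> 1 \<and> \<bar>u2 t\<bar> \<le> 1) \<and>
     (\<forall>t\<in>{0..T}. norm (x t) = 1) \<and>
     (\<forall>t\<in>{0..T}. ((\<lambda>s. Am \<alpha> \<beta> (u1 s) (u2 s) *v x s) has_integral (x t - x 0)) {0..t}) \<and>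
     (\<exists>C. C-lipschitz_on {0..T} l) \<and>
     (\<forall>t\<in>{0..T}. l t \<bullet> x t = 0 \<and> l t \<noteq> 0) \<and>
     l0 \<le> 0 \<and>
     (AE t in lborel. t \<in> {0..T} \<longrightarrow>
        (l has_vector_derivative (- (l t v* Am \<alpha> \<beta> (u1 t) (u2 t)))) (at t)) \<and>
     (AE t in lborel. t \<in> {0..T} \<longrightarrow>
        (\<forall>v1\<in>{-1..1}. \<forall>v2\<in>{-1..1}.
           Ham \<alpha> \<beta> (l t) (x t) l0 v1 v2 \<le> Ham \<alpha> \<beta> (l t) (x t) l0 (u1 t) (u2 t)) \<and>
        Ham \<alpha> \<beta> (l t) (x t) l0 (u1 t) (u2 t) = 0)"

definition switching1 :: "real \<Rightarrow> real \<Rightarrow> real^3 \<Rightarrow> real^3 \<Rightarrow> real" where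
  "switching1 \<alpha> \<beta> l y = l \<bullet> (G1m \<alpha> \<beta> *v y)"

definition switching2 :: "real \<Rightarrow> real \<Rightarrow> real^3 \<Rightarrow> real^3 \<Rightarrow> real" where
  "switching2 \<alpha> \<beta> l y = l \<bullet> (G2m \<alpha> \<beta> *v y)"

definition bang_bang_on :: "(real \<Rightarrow> real) \<Rightarrow> (real \<Rightarrow> real) \<Rightarrow> real \<Rightarrow> real \<Rightarrow> bool" where
  "bang_bang_on u1 u2 a b \<longleftrightarrow>
     (\<exists>(ts::nat \<Rightarrow> real) k. 0 < k \<and> ts 0 = a \<and> ts k = b \<and> (\<forall>i<k. ts i < ts (Suc i)) \<and>
        (\<forall>i<k. \<exists>c1\<in>{-1,1}. \<exists>c2\<in>{-1,1}.
            AE t in lborel. t \<in> {ts i<..<ts (Suc i)} \<longrightarrow> u1 t = c1 \<and> u2 t = c2))"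

definition totally_singular_on ::
  "real \<Rightarrow> real \<Rightarrow> (real \<Rightarrow> real^3) \<Rightarrow> (real \<Rightarrow> real^3) \<Rightarrow> real \<Rightarrow> real \<Rightarrow> bool" where
  "totally_singular_on \<alpha> \<beta> x l a b \<longleftrightarrow>
     (\<forall>t\<in>{a..b}. switching1 \<alpha> \<beta> (l t) (x t) = 0 \<and> switching2 \<alpha> \<beta> (l t) (x t) = 0)"

end

(*
  Along an extremal the maximised Hamiltonian  \<lambda>Fx + |\<phi>1| + |\<phi>2| + \<lambda>0  is continuous and
  vanishes almost everywhere, hence everywhere; and |\<lambda>| is constant because F, G1, G2 are
  skew-symmetric.  At the north pole \<lambda> is horizontal, so \<lambda>Fx = 0 and Cauchy-Schwarz gives
  -\<lambda>0 = |\<phi>1| + |\<phi>2| \<le> sin \<alpha> |\<lambda>|.  On the totally singular arc \<phi>1 = \<phi>2 = 0, which together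
  with \<lambda> \<bottom> x and |x| = 1 forces -\<lambda>0 = |\<lambda>Fx| = cos \<alpha> |\<lambda>|.  Hence cos \<alpha> \<le> sin \<alpha>, contradicting
  \<alpha> < \<pi>/4.
*)

theory Submission
  imports Defs
begin

unbundle cross3_syntax

lemma AE_lborel_imp_ex_in_Ioo:
  assumes "AE t in lborel. P t" and "a < (b::real)"
  shows "\<exists>t\<in>{a<..<b}. P t"
proof (rule ccontr)
  assume none: "\<not> ?thesis"
  from assms(1) obtain N where N: "N \<in> null_sets lborel" "\<And>t. t \<notin> N \<Longrightarrow> P t"
    by (auto elim: AE_E3)
  have "{a<..<b} \<subseteq> N" using none N(2) by auto
  then have "{a<..<b} \<in> null_sets lborel"
    using N(1) by (auto intro: null_sets_subset)
  with assms(2) show False by (simp add: null_sets_def)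
qed

lemma continuous_on_AE_zero_imp_zero:
  fixes f :: "real \<Rightarrow> 'a::real_normed_vector"
  assumes cont: "continuous_on {a..b} f" and "a < b"
    and ae: "AE t in lborel. t \<in> {a..b} \<longrightarrow> f t = 0"
    and t: "t \<in> {a..b}"
  shows "f t = 0"
proof (rule ccontr)
  assume "f t \<noteq> 0"
  with cont t obtain d where "d > 0"
    and d: "\<And>s. s \<in> {a..b} \<Longrightarrow> dist s t < d \<Longrightarrow> dist (f s) (f t) < norm (f t)"
    unfolding continuous_on_iff by (metis zero_less_norm_iff)
  have "max a (t - d) < min b (t + d)" using \<open>a < b\<close> \<open>d > 0\<close> t by auto
  then obtain s where s: "s \<in> {max a (t - d)<..<min b (t + d)}" "s \<in> {a..b} \<longrightarrow> f s = 0"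
    using AE_lborel_imp_ex_in_Ioo[OF ae] by blast
  then have "s \<in> {a..b}" "dist s t < d" "f s = 0" by (auto simp: dist_real_def)
  with d[of s] show False by (simp add: dist_norm)
qed

lemma negligible_image_zero_derivative:
  fixes g :: "real \<Rightarrow> real"
  assumes "\<And>t. t \<in> S \<Longrightarrow> (g has_real_derivative 0) (at t)"
  shows "negligible (g ` S)"
proof -
  define h :: "real^1 \<Rightarrow> real^1" where "h y = g (y$1) *\<^sub>R 1" for y
  have "negligible (h ` (vec ` S))"
  proof (rule baby_Sard[where f' = "\<lambda>_ _. 0"])
    show "rank (matrix ((\<lambda>_. 0) :: real^1 \<Rightarrow> real^1)) < CARD(1)"
      by (simp add: matrix_def zero_vec_def[symmetric])
  next
    fix y :: "real^1" assume "y \<in> vec ` S"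
    then obtain t where t: "t \<in> S" and y: "y = vec t" by auto
    have "(g has_derivative (*) 0) (at (y$1))"
      using assms[OF t] unfolding y vec_component has_field_derivative_def .
    with bounded_linear_imp_has_derivative[OF bounded_linear_vec_nth]
    have "((\<lambda>z. g (z$1)) has_derivative (\<lambda>z. 0 * z$1)) (at y)"
      by (rule has_derivative_compose)
    then have "(h has_derivative (\<lambda>z. (0 * z$1) *\<^sub>R 1)) (at y)"
      unfolding h_def by (rule has_derivative_scaleR_left)
    then show "(h has_derivative (\<lambda>_. 0)) (at y within vec ` S)"
      by (auto intro: has_derivative_at_withinI)
  qed simp
  then have "negligible ((\<lambda>z. z$1) ` h ` vec ` S)"
    using bounded_linear_imp_differentiable_on[OF bounded_linear_vec_nth]
    by (rule negligible_differentiable_image_negligible[rotated]) simp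
  moreover have "(\<lambda>z. z$1) ` h ` vec ` S = g ` S"
    by (simp add: h_def image_image)
  ultimately show ?thesis by simp
qed

lemma lipschitz_on_AE_zero_derivative_constant:
  fixes g :: "real \<Rightarrow> real"
  assumes lip: "C-lipschitz_on {a..b} g" and "a \<le> b"
    and ae: "AE t in lborel. t \<in> {a..b} \<longrightarrow> (g has_real_derivative 0) (at t)"
  shows "g b = g a"
proof -
  define S where "S = {t \<in> {a..b}. (g has_real_derivative 0) (at t)}"
  obtain N0 where N0: "N0 \<in> null_sets lborel"
      "\<And>t. t \<notin> N0 \<Longrightarrow> t \<in> {a..b} \<Longrightarrow> (g has_real_derivative 0) (at t)"
    using ae by (auto elim: AE_E3)
  have "{a..b} - S \<subseteq> N0" using N0(2) by (auto simp: S_def)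
  then have "negligible ({a..b} - S)"
    using N0(1) negligible_iff_null_sets null_sets_completionI negligible_subset by metis
  \<comment> \<open>Lipschitz maps send null sets to null sets, zero derivatives crush the rest (Sard).\<close>
  then have "negligible (g ` ({a..b} - S))"
    using lipschitz_onD[OF lip]
    by (intro negligible_locally_Lipschitz_image) (auto simp: dist_norm intro!: exI[of _ UNIV] exI[of _ C])
  moreover have "negligible (g ` S)"
    by (rule negligible_image_zero_derivative) (auto simp: S_def)
  moreover have "g ` {a..b} = g ` S \<union> g ` ({a..b} - S)"
    by (auto simp: S_def)
  ultimately have "negligible (g ` {a..b})"
    by (simp add: negligible_Un)
  have conn: "connected (g ` {a..b})"
    using lipschitz_on_continuous_on[OF lip] by (intro connected_continuous_image) auto
  show ?thesis
  proof (rule ccontr)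
    assume "g b \<noteq> g a"
    then obtain p q where "p < q" and pq: "p \<in> g ` {a..b}" "q \<in> g ` {a..b}"
      using \<open>a \<le> b\<close> by (metis atLeastAtMost_iff imageI linorder_neqE_linordered_idom order_refl)
    then have "negligible {p..q}"
      using connected_contains_Icc[OF conn pq] \<open>negligible (g ` {a..b})\<close> negligible_subset by blast
    moreover have "box p q \<noteq> {}"
      using \<open>p < q\<close> by (simp only: box_real(1) greaterThanLessThan_empty_iff not_le)
    ultimately show False
      using negligible_interval(1)[of p q] by (simp add: cbox_interval)
  qed
qed

lemma lipschitz_on_inner_self:
  assumes lip: "C-lipschitz_on S f" and "0 \<le> K" and bound: "\<And>t. t \<in> S \<Longrightarrow> norm (f t) \<le> K"
  shows "(2 * K * C)-lipschitz_on S (\<lambda>t. f t \<bullet> f t)"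
proof (rule lipschitz_onI)
  show "0 \<le> 2 * K * C" using lipschitz_on_nonneg[OF lip] \<open>0 \<le> K\<close> by simp
next
  fix s t assume st: "s \<in> S" "t \<in> S"
  have "\<bar>f s \<bullet> f s - f t \<bullet> f t\<bar> = \<bar>(f s - f t) \<bullet> (f s + f t)\<bar>"
    by (simp add: algebra_simps inner_commute)
  also have "\<dots> \<le> norm (f s - f t) * norm (f s + f t)"
    by (rule Cauchy_Schwarz_ineq2)
  also have "\<dots> \<le> (C * dist s t) * (2 * K)"
  proof (rule mult_mono)
    show "norm (f s - f t) \<le> C * dist s t"
      using lipschitz_onD[OF lip st] by (simp add: dist_norm)
    show "norm (f s + f t) \<le> 2 * K"
      using bound[OF st(1)] bound[OF st(2)] norm_triangle_ineq[of "f s" "f t"] by linarith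
  qed (use lipschitz_on_nonneg[OF lip] in auto)
  finally show "dist (f s \<bullet> f s) (f t \<bullet> f t) \<le> 2 * K * C * dist s t"
    by (simp add: dist_real_def mult_ac)
qed

lemma lipschitz_on_AE_orthogonal_derivative_norm_constant:
  fixes f :: "real \<Rightarrow> 'a::real_inner"
  assumes lip: "C-lipschitz_on {a..b} f"
    and ae: "AE t in lborel. t \<in> {a..b} \<longrightarrow>
               (f has_vector_derivative f' t) (at t) \<and> f t \<bullet> f' t = 0"
    and t: "t \<in> {a..b}"
  shows "norm (f t) = norm (f a)"
proof -
  have "bounded (f ` {a..b})"
    by (intro compact_imp_bounded compact_continuous_image lipschitz_on_continuous_on[OF lip])
      simp
  then obtain K where "0 < K" and K: "\<And>s. s \<in> {a..b} \<Longrightarrow> norm (f s) \<le> K"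
    by (auto simp: bounded_pos)
  have "(2 * K * C)-lipschitz_on {a..t} (\<lambda>s. f s \<bullet> f s)"
    using t K \<open>0 < K\<close> by (intro lipschitz_on_inner_self lipschitz_on_subset[OF lip]) auto
  moreover have "AE s in lborel. s \<in> {a..t} \<longrightarrow> ((\<lambda>s. f s \<bullet> f s) has_real_derivative 0) (at s)"
    using ae
  proof eventually_elim
    case (elim s)
    show ?case
    proof
      assume "s \<in> {a..t}"
      with t elim have der: "(f has_derivative (\<lambda>h. h *\<^sub>R f' s)) (at s)"
        and orth: "f s \<bullet> f' s = 0"
        by (auto simp: has_vector_derivative_def)
      have "((\<lambda>s. f s \<bullet> f s) has_derivative (\<lambda>h. f s \<bullet> (h *\<^sub>R f' s) + (h *\<^sub>R f' s) \<bullet> f s)) (at s)"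
        by (rule has_derivative_inner[OF der der])
      moreover have "(\<lambda>h. f s \<bullet> (h *\<^sub>R f' s) + (h *\<^sub>R f' s) \<bullet> f s) = (*) 0"
        using orth by (simp add: fun_eq_iff inner_commute)
      ultimately show "((\<lambda>s. f s \<bullet> f s) has_real_derivative 0) (at s)"
        by (simp only: has_field_derivative_def)
    qed
  qed
  ultimately have "f t \<bullet> f t = f a \<bullet> f a"
    using t by (intro lipschitz_on_AE_zero_derivative_constant) auto
  then show ?thesis by (simp add: norm_eq_sqrt_inner)
qed

lemma inner_Fm_cross: "l \<bullet> (Fm \<alpha> *v y) = - cos \<alpha> * (l \<times> y)$3"
  by (simp add: Fm_def cross_components matrix_vector_mult_def inner_vec_def sum_3 algebra_simps)

lemma switching1_cross: "switching1 \<alpha> \<beta> l y = - (sin \<alpha> * sin \<beta>) * (l \<times> y)$1"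
  by (simp add: switching1_def G1m_def cross_components matrix_vector_mult_def inner_vec_def sum_3
      algebra_simps)

lemma switching2_cross: "switching2 \<alpha> \<beta> l y = sin \<alpha> * cos \<beta> * (l \<times> y)$2"
  by (simp add: switching2_def G2m_def cross_components matrix_vector_mult_def inner_vec_def sum_3
      algebra_simps)

lemma inner_vector_matrix_Am_self: "l \<bullet> (l v* Am \<alpha> \<beta> v1 v2) = 0"
  by (simp add: Am_def Fm_def G1m_def G2m_def vector_matrix_mult_def inner_vec_def sum_3 algebra_simps)

definition max_Ham :: "real \<Rightarrow> real \<Rightarrow> real^3 \<Rightarrow> real^3 \<Rightarrow> real \<Rightarrow> real" where
  "max_Ham \<alpha> \<beta> l y l0 =
     l \<bullet> (Fm \<alpha> *v y) + \<bar>switching1 \<alpha> \<beta> l y\<bar> + \<bar>switching2 \<alpha> \<beta> l y\<bar> + l0"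

lemma Ham_maximal_eq_max_Ham:
  assumes max: "\<forall>v1\<in>{-1..1}. \<forall>v2\<in>{-1..1}. Ham \<alpha> \<beta> l y l0 v1 v2 \<le> Ham \<alpha> \<beta> l y l0 u1 u2"
    and "\<bar>u1\<bar> \<le> 1" "\<bar>u2\<bar> \<le> 1"
  shows "Ham \<alpha> \<beta> l y l0 u1 u2 = max_Ham \<alpha> \<beta> l y l0"
proof -
  define s1 where "s1 = switching1 \<alpha> \<beta> l y"
  define s2 where "s2 = switching2 \<alpha> \<beta> l y"
  have Ham: "Ham \<alpha> \<beta> l y l0 v1 v2 = l \<bullet> (Fm \<alpha> *v y) + v1 * s1 + v2 * s2 + l0" for v1 v2
    by (simp add: Ham_def s1_def s2_def switching1_def switching2_def)
  have "max_Ham \<alpha> \<beta> l y l0 = Ham \<alpha> \<beta> l y l0 (sgn s1) (sgn s2)"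
    by (simp add: Ham max_Ham_def s1_def[symmetric] s2_def[symmetric] sgn_if)
  also have "\<dots> \<le> Ham \<alpha> \<beta> l y l0 u1 u2"
    using max by (simp add: sgn_if)
  finally have "max_Ham \<alpha> \<beta> l y l0 \<le> Ham \<alpha> \<beta> l y l0 u1 u2" .
  moreover have le_abs: "v * s \<le> \<bar>s\<bar>" if "\<bar>v\<bar> \<le> 1" for v s :: real
  proof -
    have "v * s \<le> \<bar>v\<bar> * \<bar>s\<bar>" by (metis abs_ge_self abs_mult)
    also have "\<dots> \<le> \<bar>s\<bar>" using that by (simp add: mult_left_le_one_le)
    finally show ?thesis .
  qed
  then have "Ham \<alpha> \<beta> l y l0 u1 u2 \<le> max_Ham \<alpha> \<beta> l y l0"
    using le_abs[OF \<open>\<bar>u1\<bar> \<le> 1\<close>, of s1] le_abs[OF \<open>\<bar>u2\<bar> \<le> 1\<close>, of s2]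
    by (simp add: Ham max_Ham_def s1_def[symmetric] s2_def[symmetric])
  ultimately show ?thesis by linarith
qed

lemma continuous_on_max_Ham:
  assumes "continuous_on S l" and "continuous_on S y"
  shows "continuous_on S (\<lambda>t. max_Ham \<alpha> \<beta> (l t) (y t) l0)"
  unfolding max_Ham_def switching1_def switching2_def
  by (intro continuous_intros assms bounded_linear.continuous_on[OF matrix_vector_mul_bounded_linear])

lemma abs_sin_add_abs_cos_le_sqrt: "\<bar>sin \<beta> * p\<bar> + \<bar>cos \<beta> * q\<bar> \<le> sqrt (p\<^sup>2 + q\<^sup>2)"
proof (rule real_le_rsqrt)
  have "(\<bar>sin \<beta> * p\<bar> + \<bar>cos \<beta> * q\<bar>)\<^sup>2 + (\<bar>sin \<beta> * q\<bar> - \<bar>cos \<beta> * p\<bar>)\<^sup>2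
      = (sin \<beta>)\<^sup>2 * (p\<^sup>2 + q\<^sup>2) + (cos \<beta>)\<^sup>2 * (p\<^sup>2 + q\<^sup>2)"
    by (simp add: abs_mult power_mult_distrib power2_sum power2_diff algebra_simps)
  also have "\<dots> = ((sin \<beta>)\<^sup>2 + (cos \<beta>)\<^sup>2) * (p\<^sup>2 + q\<^sup>2)"
    by (simp only: distrib_right)
  also have "\<dots> = p\<^sup>2 + q\<^sup>2" by simp
  finally show "(\<bar>sin \<beta> * p\<bar> + \<bar>cos \<beta> * q\<bar>)\<^sup>2 \<le> p\<^sup>2 + q\<^sup>2"
    using zero_le_power2[of "\<bar>sin \<beta> * q\<bar> - \<bar>cos \<beta> * p\<bar>"] by linarith
qed

lemma max_Ham_north_le:
  assumes "l \<bullet> north = 0"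
  shows "max_Ham \<alpha> \<beta> l north l0 \<le> \<bar>sin \<alpha>\<bar> * norm l + l0"
proof -
  have "l$3 = 0" using assms by (simp add: north_def inner_vec_def sum_3)
  then have norm_l: "norm l = sqrt ((l$2)\<^sup>2 + (l$1)\<^sup>2)"
    by (simp add: norm_eq_sqrt_inner inner_vec_def sum_3 power2_eq_square)
  have "max_Ham \<alpha> \<beta> l north l0 = \<bar>sin \<alpha>\<bar> * (\<bar>sin \<beta> * l$2\<bar> + \<bar>cos \<beta> * l$1\<bar>) + l0"
    by (simp add: max_Ham_def inner_Fm_cross switching1_cross switching2_cross cross_components
        north_def abs_mult algebra_simps)
  also have "\<dots> \<le> \<bar>sin \<alpha>\<bar> * norm l + l0"
    unfolding norm_l by (simp add: mult_left_mono abs_sin_add_abs_cos_le_sqrt)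
  finally show ?thesis .
qed

lemma abs_inner_Fm_singular:
  assumes "norm y = 1" and "l \<bullet> y = 0" and "sin \<alpha> * sin \<beta> \<noteq> 0" and "sin \<alpha> * cos \<beta> \<noteq> 0"
    and "switching1 \<alpha> \<beta> l y = 0" and "switching2 \<alpha> \<beta> l y = 0"
  shows "\<bar>l \<bullet> (Fm \<alpha> *v y)\<bar> = \<bar>cos \<alpha>\<bar> * norm l"
proof -
  have "(l \<times> y)$1 = 0" "(l \<times> y)$2 = 0"
    using assms(3-6) by (simp_all add: switching1_cross switching2_cross)
  then have "norm (l \<times> y) = \<bar>(l \<times> y)$3\<bar>"
    by (simp add: norm_eq_sqrt_inner inner_vec_def sum_3 power2_eq_square[symmetric])
  moreover have "norm (l \<times> y) = norm l"
    using norm_cross_dot[of l y] assms(1,2) by simp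
  ultimately show ?thesis
    by (simp add: inner_Fm_cross abs_mult)
qed

lemma extremal_continuous_on_trajectory:
  assumes "extremal \<alpha> \<beta> T u1 u2 x l l0"
  shows "continuous_on {0..T} x"
proof -
  let ?f = "\<lambda>s. Am \<alpha> \<beta> (u1 s) (u2 s) *v x s"
  from assms have int: "\<And>t. t \<in> {0..T} \<Longrightarrow> (?f has_integral (x t - x 0)) {0..t}" and "0 < T"
    by (auto simp: extremal_def)
  then have "?f integrable_on {0..T}"
    by (meson atLeastAtMost_iff has_integral_integrable less_eq_real_def order_refl)
  then have "continuous_on {0..T} (\<lambda>t. x 0 + integral {0..t} ?f)"
    by (intro continuous_intros indefinite_integral_continuous_1)
  then show ?thesis
    by (rule continuous_on_eq) (simp add: integral_unique[OF int])
qed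

lemma extremal_max_Ham_zero:
  assumes ex: "extremal \<alpha> \<beta> T u1 u2 x l l0" and t: "t \<in> {0..T}"
  shows "max_Ham \<alpha> \<beta> (l t) (x t) l0 = 0"
proof -
  from ex obtain C where "C-lipschitz_on {0..T} l" and "0 < T"
    and bound: "\<And>t. t \<in> {0..T} \<Longrightarrow> \<bar>u1 t\<bar> \<le> 1 \<and> \<bar>u2 t\<bar> \<le> 1"
    and maximum: "AE t in lborel. t \<in> {0..T} \<longrightarrow>
        (\<forall>v1\<in>{-1..1}. \<forall>v2\<in>{-1..1}.
           Ham \<alpha> \<beta> (l t) (x t) l0 v1 v2 \<le> Ham \<alpha> \<beta> (l t) (x t) l0 (u1 t) (u2 t)) \<and>
        Ham \<alpha> \<beta> (l t) (x t) l0 (u1 t) (u2 t) = 0"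
    by (auto simp: extremal_def)
  then have "continuous_on {0..T} (\<lambda>t. max_Ham \<alpha> \<beta> (l t) (x t) l0)"
    by (intro continuous_on_max_Ham lipschitz_on_continuous_on extremal_continuous_on_trajectory[OF ex])
  moreover have "AE t in lborel. t \<in> {0..T} \<longrightarrow> max_Ham \<alpha> \<beta> (l t) (x t) l0 = 0"
    using maximum
  proof eventually_elim
    case (elim t)
    show ?case
    proof
      assume "t \<in> {0..T}"
      with elim bound have "Ham \<alpha> \<beta> (l t) (x t) l0 (u1 t) (u2 t) = max_Ham \<alpha> \<beta> (l t) (x t) l0"
        by (intro Ham_maximal_eq_max_Ham) auto
      with elim \<open>t \<in> {0..T}\<close> show "max_Ham \<alpha> \<beta> (l t) (x t) l0 = 0" by simp
    qed
  qed
  ultimately show ?thesis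
    using continuous_on_AE_zero_imp_zero[OF _ \<open>0 < T\<close> _ t] by blast
qed

lemma extremal_adjoint_norm_constant:
  assumes ex: "extremal \<alpha> \<beta> T u1 u2 x l l0" and t: "t \<in> {0..T}"
  shows "norm (l t) = norm (l 0)"
proof -
  from ex obtain C where lip: "C-lipschitz_on {0..T} l"
    and "AE t in lborel. t \<in> {0..T} \<longrightarrow>
           (l has_vector_derivative (- (l t v* Am \<alpha> \<beta> (u1 t) (u2 t)))) (at t)"
    by (auto simp: extremal_def)
  then have ae: "AE t in lborel. t \<in> {0..T} \<longrightarrow>
      (l has_vector_derivative (- (l t v* Am \<alpha> \<beta> (u1 t) (u2 t)))) (at t) \<and>
      l t \<bullet> - (l t v* Am \<alpha> \<beta> (u1 t) (u2 t)) = 0"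
    by eventually_elim (simp add: inner_vector_matrix_Am_self)
  show ?thesis
    by (rule lipschitz_on_AE_orthogonal_derivative_norm_constant[OF lip ae t])
qed

lemma extremal_north_le:
  assumes ex: "extremal \<alpha> \<beta> T u1 u2 x l l0" and x0: "x 0 = north"
  shows "- l0 \<le> \<bar>sin \<alpha>\<bar> * norm (l 0)"
proof -
  from ex have "0 \<in> {0..T}" and adjoint: "\<And>t. t \<in> {0..T} \<Longrightarrow> l t \<bullet> x t = 0"
    by (auto simp: extremal_def)
  then have "l 0 \<bullet> north = 0" using x0 by metis
  moreover have "max_Ham \<alpha> \<beta> (l 0) north l0 = 0"
    using extremal_max_Ham_zero[OF ex \<open>0 \<in> {0..T}\<close>] x0 by simp
  ultimately show ?thesis
    using max_Ham_north_le[of "l 0" \<alpha> \<beta> l0] by linarith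
qed

lemma extremal_totally_singular_eq:
  assumes ex: "extremal \<alpha> \<beta> T u1 u2 x l l0" and t: "t \<in> {0..T}"
    and "sin \<alpha> * sin \<beta> \<noteq> 0" and "sin \<alpha> * cos \<beta> \<noteq> 0"
    and sw: "switching1 \<alpha> \<beta> (l t) (x t) = 0" "switching2 \<alpha> \<beta> (l t) (x t) = 0"
  shows "- l0 = \<bar>cos \<alpha>\<bar> * norm (l 0)"
proof -
  from ex t have "norm (x t) = 1" "l t \<bullet> x t = 0" "l0 \<le> 0"
    by (auto simp: extremal_def)
  have "l t \<bullet> (Fm \<alpha> *v x t) = - l0"
    using extremal_max_Ham_zero[OF ex t] sw by (simp add: max_Ham_def)
  moreover have "\<bar>l t \<bullet> (Fm \<alpha> *v x t)\<bar> = \<bar>cos \<alpha>\<bar> * norm (l 0)"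
    using abs_inner_Fm_singular[OF \<open>norm (x t) = 1\<close> \<open>l t \<bullet> x t = 0\<close> assms(3,4) sw]
      extremal_adjoint_norm_constant[OF ex t] by simp
  ultimately show ?thesis using \<open>l0 \<le> 0\<close> by simp
qed

lemma sin_less_cos:
  assumes "0 < \<alpha>" and "\<alpha> < pi / 4"
  shows "sin \<alpha> < cos \<alpha>"
proof -
  have "sin \<alpha> < sin (pi / 4)" using assms by (intro sin_monotone_2pi) auto
  also have "\<dots> = cos (pi / 4)" by (simp add: sin_45 cos_45)
  also have "\<dots> < cos \<alpha>" using assms by (intro cos_monotone_0_pi) auto
  finally show ?thesis .
qed

theorem corollary3:
  fixes \<alpha> \<beta> :: real
  assumes "0 < \<alpha>" "\<alpha> < pi / 4" "0 < \<beta>" "\<beta> \<le> pi / 4"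
  shows "\<not> (\<exists>u1 u2 x l l0 tc \<epsilon> T.
            0 < tc \<and> 0 < \<epsilon> \<and> tc + \<epsilon> \<le> T \<and>
            extremal \<alpha> \<beta> T u1 u2 x l l0 \<and> l0 < 0 \<and> x 0 = north \<and>
            bang_bang_on u1 u2 0 tc \<and> totally_singular_on \<alpha> \<beta> x l tc (tc + \<epsilon>))"
proof
  assume "\<exists>u1 u2 x l l0 tc \<epsilon> T.
            0 < tc \<and> 0 < \<epsilon> \<and> tc + \<epsilon> \<le> T \<and>
            extremal \<alpha> \<beta> T u1 u2 x l l0 \<and> l0 < 0 \<and> x 0 = north \<and>
            bang_bang_on u1 u2 0 tc \<and> totally_singular_on \<alpha> \<beta> x l tc (tc + \<epsilon>)"
  then obtain u1 u2 x l l0 tc \<epsilon> T where "0 < tc" "0 < \<epsilon>" "tc + \<epsilon> \<le> T"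
    and ex: "extremal \<alpha> \<beta> T u1 u2 x l l0" and x0: "x 0 = north"
    and sing: "totally_singular_on \<alpha> \<beta> x l tc (tc + \<epsilon>)"
    by blast
  have tc: "tc \<in> {0..T}" using \<open>0 < tc\<close> \<open>0 < \<epsilon>\<close> \<open>tc + \<epsilon> \<le> T\<close> by auto
  have "0 < sin \<alpha>" "0 < sin \<beta>" "0 < cos \<alpha>" "0 < cos \<beta>"
    using assms by (simp_all add: sin_gt_zero cos_gt_zero)
  from ex have "0 \<in> {0..T}" and "\<forall>t\<in>{0..T}. l t \<noteq> 0"
    by (auto simp: extremal_def)
  then have "0 < norm (l 0)" by simp
  have sw: "switching1 \<alpha> \<beta> (l tc) (x tc) = 0" "switching2 \<alpha> \<beta> (l tc) (x tc) = 0"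
    using sing \<open>0 < \<epsilon>\<close> by (auto simp: totally_singular_on_def)
  have "cos \<alpha> * norm (l 0) \<le> sin \<alpha> * norm (l 0)"
    using extremal_north_le[OF ex x0] extremal_totally_singular_eq[OF ex tc _ _ sw]
      \<open>0 < sin \<alpha>\<close> \<open>0 < sin \<beta>\<close> \<open>0 < cos \<alpha>\<close> \<open>0 < cos \<beta>\<close>
    by simp
  with \<open>0 < norm (l 0)\<close> sin_less_cos[OF assms(1,2)] show False by simp
qed

end
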